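(* Let $n\ge1$ be an integer and $f\in C(\overline\Omega_H)$. Define $$\mathcal I_n^*f(\mathbf t)=\sum_{\mathbf j\in\mathbb H_n^*}f(\tfrac{\mathbf j}{4n})\,\ell_{\mathbf j,n}(\mathbf t),\qquad \ell_{\mathbf j,n}(\mathbf t)=\Phi_n^*(\mathbf t-\tfrac{\mathbf j}{4n}),\qquad \Phi^*_n(\mathbf t)=\frac1{4n^3}\sum_{\mathbf k\in\mathbb H_n^*}c^{(n)}_{\mathbf k}\phi_{\mathbf k}(\mathbf t).$$ Then $\mathcal I_n^*f\in\mathcal T_n$ and $$\mathcal I_n^*f(\tfrac{\mathbf j}{4n})=\begin{cases} f(\tfrac{\mathbf j}{4n}), & \mathbf j\in\mathbb H_n^\circ,\\ \sum_{\mathbf k\in\mathcal S_{\mathbf j}}f(\tfrac{\mathbf k}{4n}), & \mathbf j\in\mathbb H_n^*\setminus\mathbb H_n^\circ.\end{cases}$$ Furthermore, $\Phi_n^*$ is a real function and $$\Phi_n^*(\mathbf t)=\frac1{4n^3}\Big[\tfrac12\big(D_n^H(\mathbf t)+D_{n-1}^H(\mathbf t)\big)-\tfrac13\sum_{\nu=1}^4\frac{\sin (n-1)\pi t_\nu}{\sin\pi t_\nu}\sum_{\substack{j=1\\ j\ne\nu}}^4\cos n\pi(2t_j+t_\nu)-\tfrac12\sum_{j=1}^4\cos 2\pi n t_j-\tfrac13\sum_{1\le\mu<\nu\le 4}\cos 2\pi n(t_\mu+t_\nu)\Big].$$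
   Context: Let $\mathbb R^4_H=\{\mathbf t\in\mathbb R^4: t_1+t_2+t_3+t_4=0\}$, $\mathbb Z^4_H=\mathbb Z^4\cap\mathbb R^4_H$, $\Omega_H=\{\mathbf t\in\mathbb R^4_H: -1<t_i-t_j\le1,\ 1\le i<j\le 4\}$ with closure $\overline\Omega_H$; functions on $\overline\Omega_H$ are evaluated via their restriction. Let $\mathbb H=\{\mathbf k\in\mathbb Z^4_H: k_1\equiv k_2\equiv k_3\equiv k_4\pmod4\}$, $\phi_{\mathbf k}(\mathbf t)=e^{\frac{\pi i}{2}\mathbf k\cdot\mathbf t}$, $\mathbb H_m^*=\{\mathbf k\in\mathbb H: -4m\le k_i-k_j\le 4m,\ 1\le i<j\le4\}$, $\mathbb H_n^\circ=\{\mathbf k\in\mathbb H: -4n<k_i-k_j<4n \text{ for all } i\neq j\}$, $\mathcal T_n=\operatorname{span}\{\phi_{\mathbf k}:\mathbf k\in\mathbb H_n^*\}$, and $D_m^H(\mathbf t)=\sum_{\mathbf k\in\mathbb H_m^*}\phi_{\mathbf k}(\mathbf t)$. For $\mathbf k\in\mathbb H_n^*$, $c^{(n)}_{\mathbf k}=1$ if $\max_ik_i-\min_ik_i<4n$, and otherwise $c^{(n)}_{\mathbf k}=1/\binom{p+q}{p}$ where $p$ (resp. $q$) is the number of coordinates equal to $\max_ik_i$ (resp. $\min_ik_i$). For $\mathbf j\in\mathbb H_n^*$, $\mathcal S_{\mathbf j}=\{\mathbf k\in\mathbb H_n^*: \mathbf k-\mathbf j\in 4n\,\mathbb Z^4_H\}$.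 Quotients of sines are understood by continuous extension. *)

theory Defs
  imports "HOL-Analysis.Analysis" "HOL-Library.Numeral_Type"
begin

definition RH :: "(real^4) set" where
  "RH = {t. (\<Sum>i\<in>UNIV. t$i) = 0}"

definition ZH :: "(int^4) set" where
  "ZH = {k. (\<Sum>i\<in>UNIV. k$i) = 0}"

definition OmegaH :: "(real^4) set" where
  "OmegaH = {t \<in> RH. \<forall>i j. i < j \<longrightarrow> -1 < t$i - t$j \<and> t$i - t$j \<le> 1}"

definition HH :: "(int^4) set" where
  "HH = {k \<in> ZH. \<forall>i j. (k$i - k$j) mod 4 = 0}"

definition phi :: "int^4 \<Rightarrow> real^4 \<Rightarrow> complex" where
  "phi k t = exp (\<i> * complex_of_real (pi / 2 * (\<Sum>i\<in>UNIV. real_of_int (k$i) * t$i)))"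

definition Hstar :: "nat \<Rightarrow> (int^4) set" where
  "Hstar m = {k \<in> HH. \<forall>i j. i < j \<longrightarrow> - 4 * int m \<le> k$i - k$j \<and> k$i - k$j \<le> 4 * int m}"

definition Hcirc :: "nat \<Rightarrow> (int^4) set" where
  "Hcirc n = {k \<in> HH. \<forall>i j. i \<noteq> j \<longrightarrow> - 4 * int n < k$i - k$j \<and> k$i - k$j < 4 * int n}"

definition Tn :: "nat \<Rightarrow> (real^4 \<Rightarrow> complex) set" where
  "Tn n = {g. \<exists>a :: int^4 \<Rightarrow> complex. g = (\<lambda>t. \<Sum>k\<in>Hstar n. a k * phi k t)}"

definition DH :: "nat \<Rightarrow> real^4 \<Rightarrow> complex" where
  "DH m t = (\<Sum>k\<in>Hstar m. phi k t)"

definition cmax :: "int^4 \<Rightarrow> int" where "cmax k = Max (range (\<lambda>i. k$i))"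
definition cmin :: "int^4 \<Rightarrow> int" where "cmin k = Min (range (\<lambda>i. k$i))"

definition ccoef :: "nat \<Rightarrow> int^4 \<Rightarrow> real" where
  "ccoef n k = (if cmax k - cmin k < 4 * int n then 1
     else (let p = card {i. k$i = cmax k}; q = card {i. k$i = cmin k}
           in 1 / real ((p + q) choose p)))"

definition Sset :: "nat \<Rightarrow> int^4 \<Rightarrow> (int^4) set" where
  "Sset n j = {k \<in> Hstar n. \<exists>m \<in> ZH. k - j = (4 * int n) *s m}"

definition grid :: "nat \<Rightarrow> int^4 \<Rightarrow> real^4" where
  "grid n j = (\<chi> i. real_of_int (j$i) / (4 * real n))"

definition Phistar :: "nat \<Rightarrow> real^4 \<Rightarrow> complex" where
  "Phistar n t = complex_of_real (1 / (4 * real n ^ 3)) *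
      (\<Sum>k\<in>Hstar n. complex_of_real (ccoef n k) * phi k t)"

definition ell :: "nat \<Rightarrow> int^4 \<Rightarrow> real^4 \<Rightarrow> complex" where
  "ell n j t = Phistar n (t - grid n j)"

definition Istar :: "nat \<Rightarrow> (real^4 \<Rightarrow> complex) \<Rightarrow> real^4 \<Rightarrow> complex" where
  "Istar n f t = (\<Sum>j\<in>Hstar n. f (grid n j) * ell n j t)"

text \<open>sin(m pi x)/sin(pi x), extended continuously at the zeros of sin(pi x)
  (x integer) by its limit m cos(m pi x)/cos(pi x).\<close>
definition sinq :: "real \<Rightarrow> real \<Rightarrow> real" where
  "sinq m x = (if sin (pi * x) = 0 then m * cos (m * pi * x) / cos (pi * x)
               else sin (m * pi * x) / sin (pi * x))"

end

theory Submission
  imports Defs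
begin

text \<open>
  Every \<open>k \<in> \<bbbH>\<^sub>n\<^sup>*\<close> is uniquely \<open>4a - (a\<^sub>1+a\<^sub>2+a\<^sub>3+a\<^sub>4)(1,1,1,1)\<close> with
  \<open>a \<in> {0..n}\<^sup>4\<close> having a zero entry, and on \<open>\<real>\<^sup>4\<^sub>H\<close> we get
  \<open>\<phi>\<^sub>k(t) = \<Prod>\<^sub>\<nu> x\<^sub>\<nu>\<^bsup>a\<^sub>\<nu>\<^esup>\<close> with \<open>x\<^sub>\<nu> = e\<^bsup>2\<pi>i t\<^sub>\<nu>\<^esup>\<close>. The coefficient \<open>c\<^sub>k\<close> only
  depends on which entries of \<open>a\<close> are \<open>0\<close>, \<open>n\<close> or in between, so \<open>4n\<^sup>3 \<Phi>\<^sub>n\<^sup>*(t)\<close> is a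
  fixed polynomial in \<open>y\<^sub>\<nu> = x\<^sub>\<nu>\<^sup>n\<close> and the partial geometric sums
  \<open>u\<^sub>\<nu> = x\<^sub>\<nu> + \<dots> + x\<^sub>\<nu>\<^bsup>n-1\<^esup>\<close>. At a grid point all \<open>y\<^sub>\<nu>\<close> coincide; then
  \<open>(x\<^sub>\<nu> - 1)(1 + u\<^sub>\<nu>) = y - 1\<close> and \<open>x\<^sub>1x\<^sub>2x\<^sub>3x\<^sub>4 = 1\<close> make the polynomial vanish unless
  all \<open>x\<^sub>\<nu> = 1\<close>, where it equals \<open>4n\<^sup>3\<close>: this is the interpolation property.
  The closed form is a further identity of the polynomial together with
  \<open>u\<^sub>\<nu> = e\<^bsup>\<pi>i n t\<^sub>\<nu>\<^esup> sin((n-1)\<pi>t\<^sub>\<nu>) / sin(\<pi>t\<^sub>\<nu>)\<close>, and realness follows from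
  \<open>c\<^sub>-\<^sub>k = c\<^sub>k\<close>.
\<close>

lemma Hstar_iff:
  "k \<in> Hstar m \<longleftrightarrow>
     k$1 + k$2 + k$3 + k$4 = 0 \<and> (\<forall>i. 4 dvd (k$i - k$1)) \<and> (\<forall>i j. k$i - k$j \<le> 4 * int m)"
proof -
  have "(\<forall>i j. (k$i - k$j) mod 4 = 0) \<longleftrightarrow> (\<forall>i. 4 dvd (k$i - k$1))"
    by (metis mod_eq_0_iff_dvd mod_eq_dvd_iff)
  moreover have "(\<forall>i j. i < j \<longrightarrow> - 4 * int m \<le> k$i - k$j \<and> k$i - k$j \<le> 4 * int m)
      \<longleftrightarrow> (\<forall>i j. k$i - k$j \<le> 4 * int m)"
  proof
    assume bound: "\<forall>i j. i < j \<longrightarrow> - 4 * int m \<le> k$i - k$j \<and> k$i - k$j \<le> 4 * int m"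
    show "\<forall>i j. k$i - k$j \<le> 4 * int m"
    proof (intro allI)
      fix i j :: 4
      show "k$i - k$j \<le> 4 * int m"
        using bound[rule_format, of i j] bound[rule_format, of j i]
        by (cases i j rule: linorder_cases) auto
    qed
  qed (smt (verit))
  ultimately show ?thesis
    unfolding Hstar_def HH_def ZH_def by (auto simp: sum_4 add_ac)
qed

lemma Hstar_mono:
  assumes "m \<le> n"
  shows "Hstar m \<subseteq> Hstar n"
proof
  fix k assume "k \<in> Hstar m"
  moreover have "4 * int m \<le> 4 * int n" using assms by simp
  ultimately show "k \<in> Hstar n" unfolding Hstar_iff by (meson order_trans)
qed

lemma Hcirc_subset_Hstar: "Hcirc n \<subseteq> Hstar n"
  unfolding Hcirc_def Hstar_def by (auto simp: less_imp_le)

lemma uminus_in_Hstar: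
  assumes "k \<in> Hstar n"
  shows "- k \<in> Hstar n"
proof -
  have "4 dvd ((- k)$i - (- k)$1)" for i
    using assms dvd_minus_iff[of 4 "k$i - k$1"] by (simp add: Hstar_iff)
  then show ?thesis using assms by (auto simp: Hstar_iff)
qed

lemma uminus_Hstar: "uminus ` Hstar n = Hstar n"
  using uminus_in_Hstar by (force intro: image_eqI[where x = "- k" for k])

section \<open>Parametrising \<open>\<bbbH>\<^sub>m\<^sup>*\<close> by tuples with a zero entry\<close>

definition hvec :: "nat \<Rightarrow> nat \<Rightarrow> nat \<Rightarrow> nat \<Rightarrow> int^4" where
  "hvec a b c d =
     (\<chi> i. 4 * int (if i = 1 then a else if i = 2 then b else if i = 3 then c else d) - int (a + b + c + d))"

lemma hvec_nth [simp]:
  "hvec a b c d $ 1 = 4 * int a - int (a + b + c + d)"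
  "hvec a b c d $ 2 = 4 * int b - int (a + b + c + d)"
  "hvec a b c d $ 3 = 4 * int c - int (a + b + c + d)"
  "hvec a b c d $ 4 = 4 * int d - int (a + b + c + d)"
  by (simp_all add: hvec_def)

definition hbox :: "nat \<Rightarrow> (nat \<times> nat \<times> nat \<times> nat) set" where
  "hbox m = {(a, b, c, d). a \<le> m \<and> b \<le> m \<and> c \<le> m \<and> d \<le> m \<and> (a = 0 \<or> b = 0 \<or> c = 0 \<or> d = 0)}"

text \<open>The differences \<open>(k\<^sub>i - k\<^sub>1)/4\<close> determine the tuple up to a common shift, which is
  fixed by the zero entry.\<close>
definition hvec_inv :: "int^4 \<Rightarrow> nat \<times> nat \<times> nat \<times> nat" where
  "hvec_inv k =
     (let f2 = (k$2 - k$1) div 4; f3 = (k$3 - k$1) div 4; f4 = (k$4 - k$1) div 4;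
          s = min (min 0 f2) (min f3 f4)
      in (nat (- s), nat (f2 - s), nat (f3 - s), nat (f4 - s)))"

lemma hvec_in_Hstar_iff:
  assumes "(a, b, c, d) \<in> hbox n"
  shows "hvec a b c d \<in> Hstar m \<longleftrightarrow> a \<le> m \<and> b \<le> m \<and> c \<le> m \<and> d \<le> m"
  using assms unfolding Hstar_iff forall_4 hbox_def by auto

lemma hvec_inv_hvec:
  assumes "(a, b, c, d) \<in> hbox m"
  shows "hvec_inv (hvec a b c d) = (a, b, c, d)"
proof -
  have "(4 * int x - int (a + b + c + d) - (4 * int a - int (a + b + c + d))) div 4 = int x - int a"
    for x by simp
  then show ?thesis
    using assms unfolding hvec_inv_def Let_def hbox_def by (simp only: hvec_nth) auto
qed

lemma hvec_inv_Hstar: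
  assumes "k \<in> Hstar m"
  shows "hvec_inv k \<in> hbox m" and "(case hvec_inv k of (a, b, c, d) \<Rightarrow> hvec a b c d) = k"
proof -
  have sum: "k$1 + k$2 + k$3 + k$4 = 0" and dvd: "\<forall>i. 4 dvd (k$i - k$1)"
    and bound: "\<forall>i j. k$i - k$j \<le> 4 * int m"
    using assms by (auto simp: Hstar_iff)
  define f2 where "f2 = (k$2 - k$1) div 4"
  define f3 where "f3 = (k$3 - k$1) div 4"
  define f4 where "f4 = (k$4 - k$1) div 4"
  define s where "s = min (min 0 f2) (min f3 f4)"
  have k2: "k$2 = k$1 + 4 * f2" and k3: "k$3 = k$1 + 4 * f3" and k4: "k$4 = k$1 + 4 * f4"
    using dvd unfolding f2_def f3_def f4_def by auto
  have inv: "hvec_inv k = (nat (- s), nat (f2 - s), nat (f3 - s), nat (f4 - s))"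
    unfolding hvec_inv_def Let_def f2_def f3_def f4_def s_def by simp
  have s_le: "s \<le> 0" "s \<le> f2" "s \<le> f3" "s \<le> f4"
    unfolding s_def by auto
  have "\<bar>f2\<bar> \<le> int m" "\<bar>f3\<bar> \<le> int m" "\<bar>f4\<bar> \<le> int m"
    "\<bar>f2 - f3\<bar> \<le> int m" "\<bar>f2 - f4\<bar> \<le> int m" "\<bar>f3 - f4\<bar> \<le> int m"
    using bound[rule_format, of 1 2] bound[rule_format, of 2 1] bound[rule_format, of 1 3]
      bound[rule_format, of 3 1] bound[rule_format, of 1 4] bound[rule_format, of 4 1]
      bound[rule_format, of 2 3] bound[rule_format, of 3 2] bound[rule_format, of 2 4]
      bound[rule_format, of 4 2] bound[rule_format, of 3 4] bound[rule_format, of 4 3]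
    unfolding k2 k3 k4 by auto
  then show "hvec_inv k \<in> hbox m"
    unfolding inv hbox_def s_def by (auto simp: min_def split: if_splits)
  show "(case hvec_inv k of (a, b, c, d) \<Rightarrow> hvec a b c d) = k"
    unfolding inv prod.case vec_eq_iff forall_4 using s_le sum k2 k3 k4 by (simp add: algebra_simps)
qed

lemma bij_betw_hvec: "bij_betw (\<lambda>(a, b, c, d). hvec a b c d) (hbox m) (Hstar m)"
proof (rule bij_betw_byWitness[where f' = hvec_inv])
  show "(\<lambda>(a, b, c, d). hvec a b c d) ` hbox m \<subseteq> Hstar m"
    using hvec_in_Hstar_iff by (auto simp: hbox_def)
qed (auto simp: hvec_inv_hvec hvec_inv_Hstar)

lemma finite_hbox: "finite (hbox m)"
  by (rule finite_subset[of _ "{..m} \<times> {..m} \<times> {..m} \<times> {..m}"]) (auto simp: hbox_def)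

lemma finite_Hstar: "finite (Hstar m)"
  using bij_betw_finite[OF bij_betw_hvec] finite_hbox by blast

lemma sum_Hstar: "(\<Sum>k\<in>Hstar m. F k) = (\<Sum>(a, b, c, d)\<in>hbox m. F (hvec a b c d))"
  by (simp add: sum.reindex_bij_betw[OF bij_betw_hvec, symmetric] case_prod_beta')

definition E :: "real \<Rightarrow> complex" where
  "E x = exp (2 * of_real pi * \<i> * of_real x)"

lemma E_add: "E (x + y) = E x * E y"
  unfolding E_def by (simp add: algebra_simps exp_add[symmetric])

lemma E_power: "E x ^ m = E (real m * x)"
  unfolding E_def by (simp add: exp_of_nat_mult[symmetric] algebra_simps)

lemma E_of_int [simp]: "E (of_int m) = 1"
  unfolding E_def by (simp add: algebra_simps)

lemma E_eq_1_iff: "E x = 1 \<longleftrightarrow> x \<in> \<int>"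
proof
  assume "E x = 1"
  then obtain m :: int where "2 * pi * x = real_of_int (2 * m) * pi"
    unfolding E_def exp_eq_1 by auto
  then show "x \<in> \<int>" by simp
next
  assume "x \<in> \<int>"
  then show "E x = 1" by (elim Ints_cases) simp
qed

lemma phi_hvec:
  assumes "t \<in> RH"
  shows "phi (hvec a b c d) t = E (t$1) ^ a * E (t$2) ^ b * E (t$3) ^ c * E (t$4) ^ d"
proof -
  have "(\<Sum>i\<in>UNIV. real_of_int (hvec a b c d $ i) * t$i)
      = 4 * (a * t$1 + b * t$2 + c * t$3 + d * t$4) - real (a + b + c + d) * (t$1 + t$2 + t$3 + t$4)"
    unfolding sum_4 hvec_nth by (simp add: algebra_simps)
  moreover have "t$1 + t$2 + t$3 + t$4 = 0" using assms unfolding RH_def by (simp add: sum_4)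
  ultimately have h: "pi / 2 * (\<Sum>i\<in>UNIV. real_of_int (hvec a b c d $ i) * t$i)
      = 2 * pi * (a * t$1 + b * t$2 + c * t$3 + d * t$4)"
    by simp
  have "phi (hvec a b c d) t = exp (\<i> * of_real (2 * pi * (a * t$1 + b * t$2 + c * t$3 + d * t$4)))"
    unfolding phi_def h ..
  also have "\<dots> = exp (of_nat a * (2 * of_real pi * \<i> * of_real (t$1)) + of_nat b * (2 * of_real pi * \<i> * of_real (t$2))
           + of_nat c * (2 * of_real pi * \<i> * of_real (t$3)) + of_nat d * (2 * of_real pi * \<i> * of_real (t$4)))"
    by (simp add: algebra_simps)
  finally show ?thesis
    unfolding E_def by (simp only: exp_add exp_of_nat_mult)
qed

text \<open>An entry \<open>a \<in> {0..n}\<close> is at the bottom (\<open>a = 0\<close>), at the top (\<open>a = n\<close>) or inner;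
  the coefficient \<open>c\<^sub>k\<close> of \<open>k = hvec a b c d\<close> only depends on these levels.\<close>
datatype level = Bottom | Inner | Top

lemma UNIV_level: "(UNIV :: level set) = {Bottom, Inner, Top}"
  using level.exhaust by auto

instance level :: finite
  by standard (simp add: UNIV_level)

lemma sum_UNIV_level: "(\<Sum>p\<in>UNIV. f p) = f Bottom + f Inner + f Top"
  by (simp add: UNIV_level add.assoc)

definition level :: "nat \<Rightarrow> nat \<Rightarrow> level" where
  "level n a = (if a = 0 then Bottom else if a = n then Top else Inner)"

lemma level_eq_iff:
  assumes "n \<ge> 1"
  shows "level n a = Bottom \<longleftrightarrow> a = 0" and "level n a = Top \<longleftrightarrow> a = n"
  using assms by (auto simp: level_def)

definition level_sum :: "nat \<Rightarrow> 'a::comm_ring_1 \<Rightarrow> level \<Rightarrow> 'a" where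
  "level_sum n x p = (\<Sum>a\<in>{a\<in>{0..n}. level n a = p}. x ^ a)"

lemma level_sum_Inner: "level_sum n x Inner = (\<Sum>a\<in>{1..<n}. x ^ a)"
proof -
  have "{a\<in>{0..n}. level n a = Inner} = {1..<n}" by (auto simp: level_def)
  then show ?thesis by (simp add: level_sum_def)
qed

fun level_val :: "'a::one \<Rightarrow> 'a \<Rightarrow> level \<Rightarrow> 'a" where
  "level_val u y Bottom = 1"
| "level_val u y Inner = u"
| "level_val u y Top = y"

lemma level_sum_eq_level_val:
  assumes "n \<ge> 1"
  shows "level_sum n x p = level_val (level_sum n x Inner) (x ^ n) p"
proof -
  have "{a\<in>{0..n}. level n a = Bottom} = {0}" "{a\<in>{0..n}. level n a = Top} = {n}"
    using assms by (auto simp: level_def)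
  then show ?thesis by (cases p) (simp_all add: level_sum_def)
qed

lemma sum_product_4:
  fixes f g h k :: "nat \<Rightarrow> 'a::comm_ring_1"
  shows "(\<Sum>(a, b, c, d)\<in>A \<times> B \<times> C \<times> D. f a * g b * h c * k d) = sum f A * sum g B * sum h C * sum k D"
proof -
  have "sum f A * sum g B * sum h C * sum k D = sum f A * (sum g B * (sum h C * sum k D))"
    by (simp only: mult.assoc)
  also have "\<dots> = (\<Sum>(a, b, c, d)\<in>A \<times> B \<times> C \<times> D. f a * (g b * (h c * k d)))"
    by (simp only: sum_product sum.cartesian_product) (simp add: case_prod_unfold)
  finally show ?thesis unfolding mult.assoc by (rule sym)
qed

lemma sum_box_by_levels:
  fixes n :: nat and w :: "level \<Rightarrow> level \<Rightarrow> level \<Rightarrow> level \<Rightarrow> 'a::comm_ring_1"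
  defines "B \<equiv> {0..n} \<times> {0..n} \<times> {0..n} \<times> {0..n}"
  shows "(\<Sum>(a, b, c, d)\<in>B. w (level n a) (level n b) (level n c) (level n d) * (x^a * y^b * z^c * u^d))
       = (\<Sum>p\<in>UNIV. \<Sum>q\<in>UNIV. \<Sum>r\<in>UNIV. \<Sum>s\<in>UNIV.
            w p q r s * (level_sum n x p * level_sum n y q * level_sum n z r * level_sum n u s))"
proof -
  define L where "L = (\<lambda>(a, b, c, d). (level n a, level n b, level n c, level n d))"
  define W where "W = (\<lambda>(p, q, r, s). w p q r s)"
  define m where "m = (\<lambda>(a, b, c, d). x^a * y^b * z^c * u^d)"
  define S where "S p = {a\<in>{0..n}. level n a = p}" for p
  have fiber: "{v\<in>B. L v = (p, q, r, s)} = S p \<times> S q \<times> S r \<times> S s" for p q r s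
    unfolding B_def L_def S_def by auto
  have "(\<Sum>(a, b, c, d)\<in>B. w (level n a) (level n b) (level n c) (level n d) * (x^a * y^b * z^c * u^d))
      = (\<Sum>v\<in>B. W (L v) * m v)"
    by (simp add: W_def L_def m_def case_prod_unfold)
  also have "\<dots> = (\<Sum>P\<in>UNIV. \<Sum>v\<in>{v\<in>B. L v = P}. W (L v) * m v)"
    by (rule sum.group[symmetric]) (auto simp: B_def)
  also have "\<dots> = (\<Sum>(p, q, r, s)\<in>UNIV. w p q r s * (level_sum n x p * level_sum n y q * level_sum n z r * level_sum n u s))"
  proof (intro sum.cong refl, clarify)
    fix p q r s
    have "(\<Sum>v\<in>{v\<in>B. L v = (p, q, r, s)}. W (L v) * m v) = W (p, q, r, s) * (\<Sum>v\<in>S p \<times> S q \<times> S r \<times> S s. m v)"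
      unfolding fiber[symmetric] sum_distrib_left by (intro sum.cong refl) simp
    then show "(\<Sum>v\<in>{v\<in>B. L v = (p, q, r, s)}. W (L v) * m v)
        = w p q r s * (level_sum n x p * level_sum n y q * level_sum n z r * level_sum n u s)"
      unfolding m_def W_def by (simp add: sum_product_4 level_sum_def S_def)
  qed
  finally show ?thesis
    by (simp add: UNIV_Times_UNIV[symmetric] sum.cartesian_product[symmetric] del: UNIV_Times_UNIV)
qed

definition level_poly ::
    "(level \<Rightarrow> level \<Rightarrow> level \<Rightarrow> level \<Rightarrow> real) \<Rightarrow>
     complex \<Rightarrow> complex \<Rightarrow> complex \<Rightarrow> complex \<Rightarrow> complex \<Rightarrow> complex \<Rightarrow> complex \<Rightarrow> complex \<Rightarrow> complex" where
  "level_poly w y1 y2 y3 y4 u1 u2 u3 u4 =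
     (\<Sum>p\<in>UNIV. \<Sum>q\<in>UNIV. \<Sum>r\<in>UNIV. \<Sum>s\<in>UNIV. of_real (w p q r s) *
        (level_val u1 y1 p * level_val u2 y2 q * level_val u3 y3 r * level_val u4 y4 s))"

lemma sum_Hstar_by_levels:
  fixes g :: "int^4 \<Rightarrow> real" and w :: "level \<Rightarrow> level \<Rightarrow> level \<Rightarrow> level \<Rightarrow> real"
  assumes n: "n \<ge> 1" and t: "t \<in> RH"
    and g: "\<And>a b c d. (a, b, c, d) \<in> hbox n \<Longrightarrow>
              g (hvec a b c d) = w (level n a) (level n b) (level n c) (level n d)"
    and w: "\<And>p q r s. Bottom \<notin> {p, q, r, s} \<Longrightarrow> w p q r s = 0"
  shows "(\<Sum>k\<in>Hstar n. of_real (g k) * phi k t) =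
           level_poly w (E (t$1) ^ n) (E (t$2) ^ n) (E (t$3) ^ n) (E (t$4) ^ n)
             (level_sum n (E (t$1)) Inner) (level_sum n (E (t$2)) Inner)
             (level_sum n (E (t$3)) Inner) (level_sum n (E (t$4)) Inner)"
proof -
  let ?w = "\<lambda>p q r s. complex_of_real (w p q r s)"
  have has_zero: "a = 0 \<or> b = 0 \<or> c = 0 \<or> d = 0"
    if "w (level n a) (level n b) (level n c) (level n d) \<noteq> 0" for a b c d
  proof (rule ccontr)
    assume "\<not> (a = 0 \<or> b = 0 \<or> c = 0 \<or> d = 0)"
    then have "Bottom \<notin> {level n a, level n b, level n c, level n d}" by (auto simp: level_def)
    with w that show False by blast
  qed
  have "(\<Sum>k\<in>Hstar n. of_real (g k) * phi k t)
      = (\<Sum>(a, b, c, d)\<in>{0..n} \<times> {0..n} \<times> {0..n} \<times> {0..n}.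
           ?w (level n a) (level n b) (level n c) (level n d)
           * (E (t$1) ^ a * E (t$2) ^ b * E (t$3) ^ c * E (t$4) ^ d))"
    unfolding sum_Hstar
    by (rule sum.mono_neutral_cong_left)
      (auto simp: hbox_def g phi_hvec[OF t] dest: has_zero)
  also have "\<dots> = level_poly w (E (t$1) ^ n) (E (t$2) ^ n) (E (t$3) ^ n) (E (t$4) ^ n)
             (level_sum n (E (t$1)) Inner) (level_sum n (E (t$2)) Inner)
             (level_sum n (E (t$3)) Inner) (level_sum n (E (t$4)) Inner)"
    using sum_box_by_levels[where n = n and w = ?w and x = "E (t$1)" and y = "E (t$2)"
      and z = "E (t$3)" and u = "E (t$4)"]
    unfolding level_poly_def level_sum_eq_level_val[OF n, symmetric] by simp
  finally show ?thesis .
qed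

definition level_count :: "level \<Rightarrow> level \<Rightarrow> level \<Rightarrow> level \<Rightarrow> level \<Rightarrow> nat" where
  "level_count v p q r s = of_bool (p = v) + of_bool (q = v) + of_bool (r = v) + of_bool (s = v)"

text \<open>Without a top entry the binomial coefficient is \<open>1\<close>, matching \<open>c\<^sub>k = 1\<close> for
  \<open>max k - min k < 4n\<close>.\<close>
definition level_weight :: "level \<Rightarrow> level \<Rightarrow> level \<Rightarrow> level \<Rightarrow> real" where
  "level_weight p q r s =
     (let z = level_count Bottom p q r s; t = level_count Top p q r s
      in if z = 0 then 0 else 1 / real ((t + z) choose t))"

lemma card_4: "card {i::4. P i} = of_bool (P 1) + of_bool (P 2) + of_bool (P 3) + of_bool (P 4)"
proof -
  have "(\<Sum>i\<in>UNIV. of_bool (P i)) = (card {i::4. P i} :: nat)" by simp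
  then show ?thesis by (simp add: sum_4)
qed

lemma cmax_cmin_hvec:
  assumes "a = 0 \<or> b = 0 \<or> c = 0 \<or> d = 0"
  shows "cmax (hvec a b c d) = 4 * int (max (max a b) (max c d)) - int (a + b + c + d)"
    and "cmin (hvec a b c d) = - int (a + b + c + d)"
proof -
  have range: "range (\<lambda>i. k$i) = {k$1, k$2, k$3, k$4}" for k :: "int^4"
    by (simp add: UNIV_4)
  have Max4: "Max {p, q, r, v} = max p (max q (max r v))"
    and Min4: "Min {p, q, r, v} = min p (min q (min r v))" for p q r v :: int
    by simp_all
  have max_shift: "max (4 * int x - s) (4 * int y - s) = 4 * int (max x y) - s"
    and min_shift: "min (4 * int x - s) (4 * int y - s) = 4 * int (min x y) - s" for x y and s :: int
    by (simp_all add: max_def min_def)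
  show "cmax (hvec a b c d) = 4 * int (max (max a b) (max c d)) - int (a + b + c + d)"
    unfolding cmax_def range Max4 hvec_nth by (simp only: max_shift max.assoc)
  have "min a (min b (min c d)) = 0" using assms by auto
  then show "cmin (hvec a b c d) = - int (a + b + c + d)"
    unfolding cmin_def range Min4 hvec_nth by (simp only: min_shift)
qed

lemma ccoef_hvec:
  assumes n: "n \<ge> 1" and abcd: "(a, b, c, d) \<in> hbox n"
  shows "ccoef n (hvec a b c d) = level_weight (level n a) (level n b) (level n c) (level n d)"
proof -
  define M where "M = max (max a b) (max c d)"
  have zero: "a = 0 \<or> b = 0 \<or> c = 0 \<or> d = 0" and "M \<le> n"
    using abcd unfolding hbox_def M_def by auto
  note extremes = cmax_cmin_hvec[OF zero, folded M_def]
  have bottom: "level_count Bottom (level n a) (level n b) (level n c) (level n d)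
      = card {i. hvec a b c d $ i = cmin (hvec a b c d)}"
    unfolding card_4 extremes level_count_def level_eq_iff[OF n] by simp
  have "level_count Bottom (level n a) (level n b) (level n c) (level n d) \<noteq> 0"
    using zero unfolding level_count_def level_eq_iff[OF n] by auto
  show ?thesis
  proof (cases "M < n")
    case True
    then have "level_count Top (level n a) (level n b) (level n c) (level n d) = 0"
      unfolding level_count_def level_eq_iff[OF n] M_def by auto
    moreover have "cmax (hvec a b c d) - cmin (hvec a b c d) < 4 * int n"
      using True unfolding extremes by simp
    ultimately show ?thesis
      using \<open>level_count Bottom _ _ _ _ \<noteq> 0\<close> unfolding ccoef_def level_weight_def by simp
  next
    case False
    then have "M = n" using \<open>M \<le> n\<close> by simp
    then have top: "level_count Top (level n a) (level n b) (level n c) (level n d)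
        = card {i. hvec a b c d $ i = cmax (hvec a b c d)}"
      unfolding card_4 extremes level_count_def level_eq_iff[OF n] by simp
    have "\<not> cmax (hvec a b c d) - cmin (hvec a b c d) < 4 * int n"
      using \<open>M = n\<close> unfolding extremes by simp
    then show ?thesis
      using \<open>level_count Bottom _ _ _ _ \<noteq> 0\<close>
      unfolding ccoef_def level_weight_def Let_def top bottom by (simp add: add.commute)
  qed
qed

lemma Phistar_by_levels:
  assumes "n \<ge> 1" and "t \<in> RH"
  shows "Phistar n t = of_real (1 / (4 * real n ^ 3)) *
           level_poly level_weight (E (t$1) ^ n) (E (t$2) ^ n) (E (t$3) ^ n) (E (t$4) ^ n)
             (level_sum n (E (t$1)) Inner) (level_sum n (E (t$2)) Inner)
             (level_sum n (E (t$3)) Inner) (level_sum n (E (t$4)) Inner)"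
  unfolding Phistar_def
  by (subst sum_Hstar_by_levels[OF assms, where w = level_weight])
    (auto simp: ccoef_hvec[OF assms(1)] level_weight_def level_count_def)

lemma Bottom_in_levels:
  assumes "(a, b, c, d) \<in> hbox n"
  shows "Bottom \<in> {level n a, level n b, level n c, level n d}"
  using assms unfolding hbox_def level_def by auto

lemma DH_by_levels:
  assumes "n \<ge> 1" and "t \<in> RH"
  shows "DH n t =
           level_poly (\<lambda>p q r s. of_bool (Bottom \<in> {p, q, r, s}))
             (E (t$1) ^ n) (E (t$2) ^ n) (E (t$3) ^ n) (E (t$4) ^ n)
             (level_sum n (E (t$1)) Inner) (level_sum n (E (t$2)) Inner)
             (level_sum n (E (t$3)) Inner) (level_sum n (E (t$4)) Inner)"
proof -
  have "DH n t = (\<Sum>k\<in>Hstar n. of_real 1 * phi k t)"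
    unfolding DH_def by simp
  also have "\<dots> = level_poly (\<lambda>p q r s. of_bool (Bottom \<in> {p, q, r, s}))
             (E (t$1) ^ n) (E (t$2) ^ n) (E (t$3) ^ n) (E (t$4) ^ n)
             (level_sum n (E (t$1)) Inner) (level_sum n (E (t$2)) Inner)
             (level_sum n (E (t$3)) Inner) (level_sum n (E (t$4)) Inner)"
    by (rule sum_Hstar_by_levels[OF assms]) (auto dest: Bottom_in_levels)
  finally show ?thesis .
qed

lemma DH_pred_by_levels:
  assumes n: "n \<ge> 1" and "t \<in> RH"
  shows "DH (n - 1) t =
           level_poly (\<lambda>p q r s. of_bool (Bottom \<in> {p, q, r, s} \<and> Top \<notin> {p, q, r, s}))
             (E (t$1) ^ n) (E (t$2) ^ n) (E (t$3) ^ n) (E (t$4) ^ n)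
             (level_sum n (E (t$1)) Inner) (level_sum n (E (t$2)) Inner)
             (level_sum n (E (t$3)) Inner) (level_sum n (E (t$4)) Inner)"
proof -
  have "DH (n - 1) t = (\<Sum>k\<in>Hstar n \<inter> Hstar (n - 1). phi k t)"
    using Hstar_mono[of "n - 1" n] unfolding DH_def by (simp add: Int_absorb1)
  also have "\<dots> = (\<Sum>k\<in>Hstar n. of_real (of_bool (k \<in> Hstar (n - 1))) * phi k t)"
    unfolding sum.inter_restrict[OF finite_Hstar] by (intro sum.cong) auto
  also have "\<dots> = level_poly (\<lambda>p q r s. of_bool (Bottom \<in> {p, q, r, s} \<and> Top \<notin> {p, q, r, s}))
             (E (t$1) ^ n) (E (t$2) ^ n) (E (t$3) ^ n) (E (t$4) ^ n)
             (level_sum n (E (t$1)) Inner) (level_sum n (E (t$2)) Inner)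
             (level_sum n (E (t$3)) Inner) (level_sum n (E (t$4)) Inner)"
  proof (rule sum_Hstar_by_levels[OF assms])
    fix a b c d assume abcd: "(a, b, c, d) \<in> hbox n"
    have "x \<le> n - 1 \<longleftrightarrow> level n x \<noteq> Top" if "x \<le> n" for x
      using that n by (auto simp: level_def)
    with abcd Bottom_in_levels[OF abcd]
    show "of_bool (hvec a b c d \<in> Hstar (n - 1)) =
        of_bool (Bottom \<in> {level n a, level n b, level n c, level n d}
                 \<and> Top \<notin> {level n a, level n b, level n c, level n d})"
      unfolding hvec_in_Hstar_iff[OF abcd] hbox_def by auto
  qed simp
  finally show ?thesis .
qed

section \<open>Identities for the level polynomial\<close>

lemma level_poly_weight_expand:
  "level_poly level_weight z z z z u1 u2 u3 u4 =
     1 + z + z^2 + z^3 + (1 + z + z^2) * (u1 + u2 + u3 + u4)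
     + (1 + z) * (u1*u2 + u1*u3 + u1*u4 + u2*u3 + u2*u4 + u3*u4)
     + (u1*u2*u3 + u1*u2*u4 + u1*u3*u4 + u2*u3*u4)"
  unfolding level_poly_def sum_UNIV_level
  by (simp add: level_weight_def level_count_def eval_nat_numeral)
    (simp add: algebra_simps power2_eq_square power3_eq_cube)

lemma level_poly_weight_diagonal:
  "(1 - z) * level_poly level_weight z z z z u1 u2 u3 u4
     = (1 + u1) * (1 + u2) * (1 + u3) * (1 + u4) - (z + u1) * (z + u2) * (z + u3) * (z + u4)"
  unfolding level_poly_weight_expand by (simp add: algebra_simps power2_eq_square power3_eq_cube)

lemma level_poly_weight_one:
  "level_poly level_weight 1 1 1 1 u1 u2 u3 u4
     = (1 + u2) * (1 + u3) * (1 + u4) + (1 + u1) * (1 + u3) * (1 + u4)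
       + (1 + u1) * (1 + u2) * (1 + u4) + (1 + u1) * (1 + u2) * (1 + u3)"
  unfolding level_poly_weight_expand by (simp add: algebra_simps)

text \<open>The closed form of \<open>\<Phi>\<^sub>n\<^sup>*\<close> is this identity with \<open>y\<^sub>\<nu> = e\<^bsup>2\<pi>i n t\<^sub>\<nu>\<^esup>\<close>.\<close>
lemma level_poly_weight_eq_DH:
  "level_poly level_weight y1 y2 y3 y4 u1 u2 u3 u4 =
     (level_poly (\<lambda>p q r s. of_bool (Bottom \<in> {p, q, r, s})) y1 y2 y3 y4 u1 u2 u3 u4
      + level_poly (\<lambda>p q r s. of_bool (Bottom \<in> {p, q, r, s} \<and> Top \<notin> {p, q, r, s})) y1 y2 y3 y4 u1 u2 u3 u4) / 2
     - (1/4 * (y1 + y2 + y3 + y4) + 1/4 * (y2*y3*y4 + y1*y3*y4 + y1*y2*y4 + y1*y2*y3)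
        + 1/3 * (y1*y2 + y1*y3 + y1*y4 + y2*y3 + y2*y4 + y3*y4)
        + 1/6 * (u1 * (y2 + y3 + y4 + y3*y4 + y2*y4 + y2*y3) + u2 * (y1 + y3 + y4 + y3*y4 + y1*y4 + y1*y3)
               + u3 * (y1 + y2 + y4 + y2*y4 + y1*y4 + y1*y2) + u4 * (y1 + y2 + y3 + y2*y3 + y1*y3 + y1*y2)))"
  unfolding level_poly_def sum_UNIV_level
  by (simp add: level_weight_def level_count_def eval_nat_numeral) (simp add: field_simps)

lemma geometric_level_sum:
  fixes x :: "'a::comm_ring_1"
  assumes "n \<ge> 1"
  shows "(x - 1) * (1 + level_sum n x Inner) = x ^ n - 1"
    and "x * (1 + level_sum n x Inner) = x ^ n + level_sum n x Inner"
proof -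
  have "{..<n} = insert 0 {1..<n}" using assms by auto
  then have "1 + level_sum n x Inner = (\<Sum>i<n. x ^ i)" by (simp add: level_sum_Inner)
  then show *: "(x - 1) * (1 + level_sum n x Inner) = x ^ n - 1"
    by (simp add: power_diff_1_eq)
  show "x * (1 + level_sum n x Inner) = x ^ n + level_sum n x Inner"
    using * by (simp add: algebra_simps)
qed

lemma level_poly_weight_at_roots:
  fixes x1 x2 x3 x4 z :: complex
  assumes n: "n \<ge> 1" and prod: "x1 * x2 * x3 * x4 = 1"
    and roots: "x1 ^ n = z" "x2 ^ n = z" "x3 ^ n = z" "x4 ^ n = z"
  shows "level_poly level_weight z z z z
            (level_sum n x1 Inner) (level_sum n x2 Inner) (level_sum n x3 Inner) (level_sum n x4 Inner)
         = (if x1 = 1 \<and> x2 = 1 \<and> x3 = 1 \<and> x4 = 1 then 4 * of_nat n ^ 3 else 0)"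
proof -
  define u1 u2 u3 u4 where "u1 = level_sum n x1 Inner" and "u2 = level_sum n x2 Inner"
    and "u3 = level_sum n x3 Inner" and "u4 = level_sum n x4 Inner"
  have geo: "(x1 - 1) * (1 + u1) = z - 1" "(x2 - 1) * (1 + u2) = z - 1"
            "(x3 - 1) * (1 + u3) = z - 1" "(x4 - 1) * (1 + u4) = z - 1"
    unfolding u1_def u2_def u3_def u4_def by (simp_all add: geometric_level_sum(1)[OF n] roots)
  have shift: "z + u1 = x1 * (1 + u1)" "z + u2 = x2 * (1 + u2)"
              "z + u3 = x3 * (1 + u3)" "z + u4 = x4 * (1 + u4)"
    unfolding u1_def u2_def u3_def u4_def by (simp_all add: geometric_level_sum(2)[OF n] roots)
  show ?thesis
    unfolding u1_def[symmetric] u2_def[symmetric] u3_def[symmetric] u4_def[symmetric]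
  proof (cases "z = 1")
    case False
    have "(1 - z) * level_poly level_weight z z z z u1 u2 u3 u4 = 0"
      unfolding level_poly_weight_diagonal shift using prod by (simp add: algebra_simps)
    moreover have "x1 \<noteq> 1" using False roots by auto
    ultimately show "level_poly level_weight z z z z u1 u2 u3 u4
        = (if x1 = 1 \<and> x2 = 1 \<and> x3 = 1 \<and> x4 = 1 then 4 * of_nat n ^ 3 else 0)"
      using False by simp
  next
    case True
    then have poly: "level_poly level_weight z z z z u1 u2 u3 u4
        = (1 + u2) * (1 + u3) * (1 + u4) + (1 + u1) * (1 + u3) * (1 + u4)
          + (1 + u1) * (1 + u2) * (1 + u4) + (1 + u1) * (1 + u2) * (1 + u3)"
      using level_poly_weight_one by simp
    show "level_poly level_weight z z z z u1 u2 u3 u4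
        = (if x1 = 1 \<and> x2 = 1 \<and> x3 = 1 \<and> x4 = 1 then 4 * of_nat n ^ 3 else 0)"
    proof (cases "x1 = 1 \<and> x2 = 1 \<and> x3 = 1 \<and> x4 = 1")
      case all_one: True
      have "1 + level_sum n (1::complex) Inner = of_nat n"
        using n by (simp add: level_sum_Inner of_nat_diff)
      then have "1 + u1 = of_nat n" "1 + u2 = of_nat n" "1 + u3 = of_nat n" "1 + u4 = of_nat n"
        unfolding u1_def u2_def u3_def u4_def using all_one by auto
      with all_one show ?thesis
        unfolding poly by (simp add: power3_eq_cube)
    next
      case False
      text \<open>Since \<open>x\<^sub>1x\<^sub>2x\<^sub>3x\<^sub>4 = 1\<close>, at least two \<open>x\<^sub>\<nu> \<noteq> 1\<close>, and each of them
        kills a factor \<open>1 + u\<^sub>\<nu>\<close>.\<close>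
      have "x1 = 1 \<or> 1 + u1 = 0" "x2 = 1 \<or> 1 + u2 = 0" "x3 = 1 \<or> 1 + u3 = 0" "x4 = 1 \<or> 1 + u4 = 0"
        using geo \<open>z = 1\<close> by auto
      with prod False show ?thesis
        unfolding poly by auto
    qed
  qed
qed

section \<open>Interpolation at the grid\<close>

lemma Phistar_grid:
  assumes n: "n \<ge> 1" and sum: "d$1 + d$2 + d$3 + d$4 = 0" and dvd: "\<forall>i. 4 dvd (d$i - d$1)"
  shows "Phistar n (grid n d) = (if \<forall>i. 4 * int n dvd d$i then 1 else 0)"
proof -
  define t where "t = grid n d"
  have t_nth: "t$i = real_of_int (d$i) / (4 * real n)" for i
    unfolding t_def grid_def by simp
  have "t$1 + t$2 + t$3 + t$4 = real_of_int (d$1 + d$2 + d$3 + d$4) / (4 * real n)"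
    unfolding t_nth by (simp add: add_divide_distrib)
  then have t_sum: "t$1 + t$2 + t$3 + t$4 = 0" using sum by simp
  then have t: "t \<in> RH" by (simp add: RH_def sum_4)
  have root: "E (t$i) ^ n = E (t$1) ^ n" for i
  proof -
    obtain e where "d$i - d$1 = 4 * e" using dvd unfolding dvd_def by blast
    then have "real n * t$i = real n * t$1 + real_of_int e"
      using n unfolding t_nth by (simp add: field_simps)
    then show ?thesis unfolding E_power by (simp add: E_add)
  qed
  have prod: "E (t$1) * E (t$2) * E (t$3) * E (t$4) = 1"
    using t_sum E_of_int[of 0] by (simp flip: E_add)
  have one_iff: "E (t$i) = 1 \<longleftrightarrow> 4 * int n dvd d$i" for i
  proof
    assume "E (t$i) = 1"
    then obtain m :: int where "real_of_int (d$i) / (4 * real n) = of_int m"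
      unfolding E_eq_1_iff t_nth by (auto elim: Ints_cases)
    then have "real_of_int (d$i) = real_of_int (m * (4 * int n))"
      using n by (simp add: field_simps)
    then show "4 * int n dvd d$i" by (simp only: of_int_eq_iff) simp
  next
    assume "4 * int n dvd d$i"
    then obtain m where "d$i = 4 * int n * m" by blast
    then show "E (t$i) = 1" unfolding t_nth using n by simp
  qed
  have "Phistar n t = of_real (1 / (4 * real n ^ 3)) *
      (if E (t$1) = 1 \<and> E (t$2) = 1 \<and> E (t$3) = 1 \<and> E (t$4) = 1 then 4 * of_nat n ^ 3 else 0)"
    unfolding Phistar_by_levels[OF n t] root[of 2] root[of 3] root[of 4]
      level_poly_weight_at_roots[OF n prod refl root[of 2] root[of 3] root[of 4]] ..
  then show ?thesis
    unfolding t_def[symmetric] forall_4 one_iff using n by simp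
qed

lemma grid_diff: "grid n j - grid n l = grid n (j - l)"
  unfolding grid_def by (simp add: vec_eq_iff diff_divide_distrib)

lemma Sset_eq:
  assumes n: "n \<ge> 1" and j: "j \<in> Hstar n"
  shows "Sset n j = {l \<in> Hstar n. \<forall>i. 4 * int n dvd (j - l)$i}"
proof (intro set_eqI iffI)
  fix k assume "k \<in> Sset n j"
  then obtain m where "k \<in> Hstar n" and km: "k - j = (4 * int n) *s m" unfolding Sset_def by blast
  moreover have "(j - k)$i = - (4 * int n * m$i)" for i
    using arg_cong[OF km, of "\<lambda>v. v$i"] by simp
  ultimately show "k \<in> {l \<in> Hstar n. \<forall>i. 4 * int n dvd (j - l)$i}" by simp
next
  fix k assume "k \<in> {l \<in> Hstar n. \<forall>i. 4 * int n dvd (j - l)$i}"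
  then have k: "k \<in> Hstar n" and dvd: "\<forall>i. 4 * int n dvd (j - k)$i" by auto
  define m where "m = (\<chi> i. (k$i - j$i) div (4 * int n))"
  have km: "k$i - j$i = 4 * int n * m$i" for i
    using dvd[rule_format, of i] unfolding m_def by (simp add: dvd_diff_commute)
  have "4 * int n * (m$1 + m$2 + m$3 + m$4) = 0"
    using km[of 1] km[of 2] km[of 3] km[of 4] j k by (simp add: Hstar_iff algebra_simps)
  then have "m \<in> ZH" unfolding ZH_def sum_4 using n by simp
  moreover have "k - j = (4 * int n) *s m" unfolding vec_eq_iff using km by simp
  ultimately show "k \<in> Sset n j" unfolding Sset_def using k by blast
qed

lemma Istar_grid:
  assumes n: "n \<ge> 1" and j: "j \<in> Hstar n"
  shows "Istar n f (grid n j) = (\<Sum>k\<in>Sset n j. f (grid n k))"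
proof -
  have "Istar n f (grid n j) = (\<Sum>l\<in>Hstar n. if \<forall>i. 4 * int n dvd (j - l)$i then f (grid n l) else 0)"
    unfolding Istar_def ell_def grid_diff
  proof (intro sum.cong refl)
    fix l assume l: "l \<in> Hstar n"
    have "4 dvd ((j - l)$i - (j - l)$1)" for i
    proof -
      have "4 dvd ((j$i - j$1) - (l$i - l$1))"
        by (rule dvd_diff) (use j l in \<open>auto simp: Hstar_iff\<close>)
      then show ?thesis by (simp add: algebra_simps)
    qed
    moreover have "(j - l)$1 + (j - l)$2 + (j - l)$3 + (j - l)$4 = 0"
      using j l by (simp add: Hstar_iff)
    ultimately show "f (grid n l) * Phistar n (grid n (j - l))
        = (if \<forall>i. 4 * int n dvd (j - l)$i then f (grid n l) else 0)"
      by (simp add: Phistar_grid[OF n])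
  qed
  then show ?thesis
    unfolding Sset_eq[OF n j] by (simp add: sum.inter_filter finite_Hstar)
qed

lemma Sset_Hcirc:
  assumes n: "n \<ge> 1" and j: "j \<in> Hcirc n"
  shows "Sset n j = {j}"
proof -
  have "l = j" if l: "l \<in> Hstar n" and dvd: "\<forall>i. 4 * int n dvd (j - l)$i" for l
  proof -
    define N where "N = 4 * int n"
    have "N > 0" unfolding N_def using n by simp
    define e where "e i = (j$i - l$i) div N" for i
    have e: "j$i - l$i = N * e i" for i
      using dvd[rule_format, of i] unfolding e_def N_def by simp
    have l_bound: "l$a - l$b \<le> N" for a b
      using l unfolding Hstar_iff N_def by blast
    have j_bound: "j$a - j$b < N" if "a \<noteq> b" for a b
      using j that unfolding Hcirc_def N_def by blast
    text \<open>The \<open>e\<^sub>i\<close> sum to zero and pairwise differ by less than \<open>2\<close>, so they all vanish.\<close>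
    have close: "e a - e b \<le> 1" if "a \<noteq> b" for a b
    proof -
      have "N * (e a - e b) = (j$a - j$b) + (l$b - l$a)"
        using e[of a] e[of b] by (simp add: algebra_simps)
      also have "\<dots> < N * 2"
        using l_bound[of b a] j_bound[OF that] by simp
      finally show ?thesis using \<open>N > 0\<close> by (simp add: mult_less_cancel_left)
    qed
    have "N * (e 1 + e 2 + e 3 + e 4) = 0"
      using e[of 1] e[of 2] e[of 3] e[of 4] j l
      unfolding Hcirc_def HH_def ZH_def sum_4 by (simp add: Hstar_iff algebra_simps)
    then have "e 1 + e 2 + e 3 + e 4 = 0" using \<open>N > 0\<close> by simp
    moreover note close[of 1 2] close[of 1 3] close[of 1 4] close[of 2 1] close[of 2 3] close[of 2 4]
      close[of 3 1] close[of 3 2] close[of 3 4] close[of 4 1] close[of 4 2] close[of 4 3]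
    ultimately have "e 1 = 0 \<and> e 2 = 0 \<and> e 3 = 0 \<and> e 4 = 0" by simp
    then show "l = j" unfolding vec_eq_iff forall_4 using e by (simp add: algebra_simps)
  qed
  moreover have "j \<in> Hstar n" using j Hcirc_subset_Hstar by blast
  ultimately show ?thesis unfolding Sset_eq[OF n \<open>j \<in> Hstar n\<close>] by auto
qed

lemma phi_diff: "phi k (t - s) = phi k t * phi k (- s)"
proof -
  have "(\<Sum>i\<in>UNIV. real_of_int (k$i) * (t - s)$i)
      = (\<Sum>i\<in>UNIV. real_of_int (k$i) * t$i) + (\<Sum>i\<in>UNIV. real_of_int (k$i) * (- s)$i)"
    by (simp add: algebra_simps sum.distrib[symmetric] sum_negf)
  then show ?thesis unfolding phi_def by (simp add: distrib_left exp_add)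
qed

lemma Istar_in_Tn: "Istar n f \<in> Tn n"
proof -
  define C where "C = complex_of_real (1 / (4 * real n ^ 3))"
  define a where "a k = C * of_real (ccoef n k) * (\<Sum>j\<in>Hstar n. f (grid n j) * phi k (- grid n j))" for k
  have "Istar n f t = (\<Sum>k\<in>Hstar n. a k * phi k t)" for t
  proof -
    have "Istar n f t = (\<Sum>j\<in>Hstar n. \<Sum>k\<in>Hstar n.
        f (grid n j) * (C * (of_real (ccoef n k) * (phi k t * phi k (- grid n j)))))"
      unfolding Istar_def ell_def Phistar_def phi_diff C_def by (simp add: sum_distrib_left)
    also have "\<dots> = (\<Sum>k\<in>Hstar n. \<Sum>j\<in>Hstar n.
        f (grid n j) * (C * (of_real (ccoef n k) * (phi k t * phi k (- grid n j)))))"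
      by (rule sum.swap)
    also have "\<dots> = (\<Sum>k\<in>Hstar n. a k * phi k t)"
      unfolding a_def by (simp add: sum_distrib_left sum_distrib_right mult_ac)
    finally show ?thesis .
  qed
  then show ?thesis unfolding Tn_def by blast
qed

section \<open>Realness and the closed form of \<open>\<Phi>\<^sub>n\<^sup>*\<close>\<close>

lemma cmax_uminus: "cmax (- k) = - cmin k"
  and cmin_uminus: "cmin (- k) = - cmax k"
  unfolding cmax_def cmin_def UNIV_4 by (simp_all add: max_def min_def)

lemma ccoef_uminus: "ccoef n (- k) = ccoef n k"
proof -
  have "(q + p) choose q = (p + q) choose p" for p q :: nat
    using binomial_symmetric[of q "q + p"] by (simp add: add.commute)
  moreover have "{i. (- k)$i = cmax (- k)} = {i. k$i = cmin k}"
    and "{i. (- k)$i = cmin (- k)} = {i. k$i = cmax k}"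
    unfolding cmax_uminus cmin_uminus by auto
  ultimately show ?thesis unfolding ccoef_def Let_def cmax_uminus cmin_uminus by simp
qed

lemma phi_uminus: "phi (- k) t = cnj (phi k t)"
  unfolding phi_def exp_cnj by (simp add: sum_negf)

lemma Phistar_real: "Im (Phistar n t) = 0"
proof -
  define S where "S = (\<Sum>k\<in>Hstar n. of_real (ccoef n k) * phi k t)"
  have "cnj S = (\<Sum>k\<in>Hstar n. of_real (ccoef n (- k)) * phi (- k) t)"
    unfolding S_def by (simp add: phi_uminus ccoef_uminus)
  also have "\<dots> = (\<Sum>k\<in>uminus ` Hstar n. of_real (ccoef n k) * phi k t)"
    by (simp add: sum.reindex inj_on_def)
  also have "\<dots> = S" unfolding uminus_Hstar S_def ..
  finally have "Im S = 0" using cnj.sel(2)[of S] by simp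
  then show ?thesis unfolding Phistar_def S_def[symmetric] by simp
qed

definition epin :: "nat \<Rightarrow> real \<Rightarrow> complex" where
  "epin n x = exp (\<i> * of_real (real n * pi * x))"

lemma epin_add: "epin n (x + y) = epin n x * epin n y"
  unfolding epin_def by (simp add: algebra_simps exp_add[symmetric])

lemma epin_double: "epin n (2 * x) = epin n x ^ 2"
  unfolding epin_def by (simp add: exp_of_nat_mult[symmetric] algebra_simps)

lemma E_power_epin: "E x ^ n = epin n x ^ 2"
  unfolding E_power epin_double[symmetric] unfolding E_def epin_def by (simp add: algebra_simps)

lemma sum_even_powers:
  fixes \<beta> :: "'a::field"
  assumes "\<beta> \<noteq> 0"
  shows "(\<beta> - inverse \<beta>) * (\<Sum>a\<in>{1..m}. \<beta> ^ (2 * a)) = \<beta> ^ (m + 1) * (\<beta> ^ m - inverse \<beta> ^ m)"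
proof -
  have shift: "inverse \<beta> * \<beta> ^ Suc k = \<beta> ^ k" for k
    using assms by simp
  have "(\<beta> - inverse \<beta>) * (\<Sum>a\<in>{1..m}. \<beta> ^ (2 * a)) = \<beta> ^ (2 * m + 1) - \<beta>"
  proof (induction m)
    case (Suc m)
    have "(\<beta> - inverse \<beta>) * (\<Sum>a\<in>{1..Suc m}. \<beta> ^ (2 * a))
        = (\<beta> - inverse \<beta>) * (\<Sum>a\<in>{1..m}. \<beta> ^ (2 * a)) + (\<beta> * \<beta> ^ Suc (2 * m + 1) - inverse \<beta> * \<beta> ^ Suc (2 * m + 1))"
      by (simp add: algebra_simps)
    also have "\<dots> = \<beta> ^ (2 * Suc m + 1) - \<beta>"
      unfolding Suc.IH shift by simp
    finally show ?case .
  qed simp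
  also have "\<dots> = \<beta> ^ (m + 1) * (\<beta> ^ m - inverse \<beta> ^ m)"
    using assms by (simp add: algebra_simps power_add power_mult power2_eq_square power_inverse field_simps)
  finally show ?thesis .
qed

lemma level_sum_E_Inner:
  assumes n: "n \<ge> 1"
  shows "level_sum n (E x) Inner = epin n x * of_real (sinq (real n - 1) x)"
proof (cases "sin (pi * x) = 0")
  case True
  then obtain k :: int where k: "x = of_int k"
    using sin_zero_iff_int2[of "pi * x"] by auto
  define \<alpha> \<theta> where "\<alpha> = (real n - 1) * pi * x" and "\<theta> = pi * x"
  have "sin (real n * pi * x) = 0" "sin \<alpha> = 0"
    unfolding k \<alpha>_def using sin_npi_int[of "int n * k"] sin_npi_int[of "(int n - 1) * k"] n
    by (simp_all add: algebra_simps)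
  have "sin \<theta> = 0" using True unfolding \<theta>_def .
  then have "cos \<theta> \<noteq> 0" and cos_sq: "cos \<alpha> * cos \<alpha> = 1"
    using sin_cos_squared_add[of \<theta>] sin_cos_squared_add[of \<alpha>] \<open>sin \<alpha> = 0\<close>
    by (auto simp: power2_eq_square)
  have "cos (real n * pi * x) = cos \<alpha> * cos \<theta>"
    using cos_add[of \<alpha> \<theta>] \<open>sin \<theta> = 0\<close> unfolding \<alpha>_def \<theta>_def by (simp add: algebra_simps)
  then have "epin n x * of_real (sinq (real n - 1) x)
      = of_real (cos \<alpha> * cos \<theta> * ((real n - 1) * cos \<alpha> / cos \<theta>))"
    using True \<open>sin (real n * pi * x) = 0\<close> unfolding epin_def sinq_def cis_conv_exp[symmetric] \<alpha>_def \<theta>_def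
    by (simp add: cis.ctr complex_eq_iff)
  also have "cos \<alpha> * cos \<theta> * ((real n - 1) * cos \<alpha> / cos \<theta>) = (real n - 1) * (cos \<alpha> * cos \<alpha>)"
    using \<open>cos \<theta> \<noteq> 0\<close> by (simp add: field_simps)
  also have "\<dots> = real n - 1" using cos_sq by simp
  finally show ?thesis
    unfolding k level_sum_Inner using n by (simp add: of_nat_diff)
next
  case False
  define m where "m = n - 1"
  define \<beta> where "\<beta> = exp (\<i> * of_real (pi * x))"
  have "\<beta> \<noteq> 0" unfolding \<beta>_def by simp
  have E_x: "E x = \<beta> ^ 2" and epin_x: "epin n x = \<beta> ^ n"
    unfolding E_def epin_def \<beta>_def by (simp_all add: exp_of_nat_mult[symmetric] algebra_simps)
  have sin_exp: "of_real (sin (real k * (pi * x))) = (\<beta> ^ k - inverse \<beta> ^ k) / (2 * \<i>)" for k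
    unfolding \<beta>_def sin_of_real[symmetric] sin_exp_eq
    by (simp add: exp_minus[symmetric] exp_of_nat_mult[symmetric] power_inverse algebra_simps)
  have sin_\<theta>: "of_real (sin (pi * x)) = (\<beta> - inverse \<beta>) / (2 * \<i>)"
    using sin_exp[of 1] by simp
  have nonzero: "\<beta> - inverse \<beta> \<noteq> 0" using False sin_\<theta> by auto
  have m_eq: "(real n - 1) * pi * x = real m * (pi * x)"
    unfolding m_def using n by (simp add: of_nat_diff)
  have "complex_of_real (sinq (real n - 1) x) = of_real (sin (real m * (pi * x))) / of_real (sin (pi * x))"
    unfolding sinq_def m_eq by (simp only: \<open>sin (pi * x) \<noteq> 0\<close> if_False of_real_divide)
  also have "\<dots> = (2 * \<i> * of_real (sin (real m * (pi * x)))) / (2 * \<i> * of_real (sin (pi * x)))"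
    by (rule mult_divide_mult_cancel_left[symmetric]) simp
  also have "\<dots> = (\<beta> ^ m - inverse \<beta> ^ m) / (\<beta> - inverse \<beta>)"
    unfolding sin_exp[of m] sin_\<theta> by simp
  finally have sinq_x: "of_real (sinq (real n - 1) x) = (\<beta> ^ m - inverse \<beta> ^ m) / (\<beta> - inverse \<beta>)" .
  have "level_sum n (E x) Inner = (\<Sum>a\<in>{1..m}. \<beta> ^ (2 * a))"
    unfolding level_sum_Inner E_x m_def power_mult[symmetric] using n
    by (intro sum.cong) auto
  then show ?thesis
    unfolding epin_x sinq_x using sum_even_powers[OF \<open>\<beta> \<noteq> 0\<close>, of m] n nonzero
    by (simp add: field_simps m_def)
qed

lemma cos_epin: "x + y = 0 \<Longrightarrow> of_real (cos (real n * pi * x)) = (epin n x + epin n y) / 2"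
  unfolding epin_def cos_of_real[symmetric] cos_exp_eq by (simp add: add_eq_0_iff2)

lemma cos_epin_mixed:
  "x + y + z + w = 0 \<Longrightarrow> of_real (cos (real n * pi * (2 * x + y))) =
     (epin n x ^ 2 * epin n y + epin n z ^ 2 * epin n w ^ 2 * epin n y) / 2"
  using cos_epin[of "2 * x + y" "2 * z + 2 * w + y" n] by (simp add: epin_add epin_double)

lemma cos_epin_single:
  assumes "x + y + z + w = 0"
  shows "of_real (cos (2 * pi * real n * x)) = (epin n x ^ 2 + epin n y ^ 2 * epin n z ^ 2 * epin n w ^ 2) / 2"
proof -
  have "of_real (cos (real n * pi * (2 * x))) = (epin n (2 * x) + epin n (2 * y + 2 * z + 2 * w)) / 2"
    by (rule cos_epin) (use assms in linarith)
  moreover have "2 * pi * real n * x = real n * pi * (2 * x)" by simp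
  ultimately show ?thesis by (simp only: epin_add epin_double)
qed

lemma cos_epin_pair:
  assumes "x + y + z + w = 0"
  shows "of_real (cos (2 * pi * real n * (x + y))) = (epin n x ^ 2 * epin n y ^ 2 + epin n z ^ 2 * epin n w ^ 2) / 2"
proof -
  have "of_real (cos (real n * pi * (2 * x + 2 * y))) = (epin n (2 * x + 2 * y) + epin n (2 * z + 2 * w)) / 2"
    by (rule cos_epin) (use assms in linarith)
  moreover have "2 * pi * real n * (x + y) = real n * pi * (2 * x + 2 * y)" by (simp add: algebra_simps)
  ultimately show ?thesis by (simp only: epin_add epin_double)
qed

lemma sum_4_off_diagonal:
  fixes g :: "4 \<Rightarrow> real"
  shows "(\<Sum>\<nu>\<in>UNIV. g \<nu> * (\<Sum>j\<in>UNIV - {\<nu>}. f j \<nu>)) =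
     g 1 * (f 2 1 + f 3 1 + f 4 1) + g 2 * (f 1 2 + f 3 2 + f 4 2)
     + g 3 * (f 1 3 + f 2 3 + f 4 3) + g 4 * (f 1 4 + f 2 4 + f 3 4)"
  by (simp add: sum_diff1 sum_4 algebra_simps)

lemma sum_4_pairs:
  fixes f :: "4 \<Rightarrow> 4 \<Rightarrow> real"
  shows "(\<Sum>(\<mu>, \<nu>)\<in>{(\<mu>::4, \<nu>). \<mu> < \<nu>}. f \<mu> \<nu>) = f 4 1 + f 4 2 + f 4 3 + f 1 2 + f 1 3 + f 2 3"
proof -
  text \<open>The order of \<open>4\<close> is that of the representatives \<open>0,1,2,3\<close>, so \<open>4\<close> comes first.\<close>
  have rep: "Rep_bit0 (1::4) = 1" "Rep_bit0 (2::4) = 2" "Rep_bit0 (3::4) = 3" "Rep_bit0 (4::4) = 0"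
    by (simp_all add: bit0.Rep_numeral bit0.Rep_1)
  have less: "(4::4) < 1" "(4::4) < 2" "(4::4) < 3" "(1::4) < 2" "(1::4) < 3" "(2::4) < 3"
    "\<not> (a::4) < a" "\<not> (1::4) < 4" "\<not> (2::4) < 4" "\<not> (3::4) < 4"
    "\<not> (2::4) < 1" "\<not> (3::4) < 1" "\<not> (3::4) < 2" for a
    by (simp_all add: less_bit0_def rep)
  have "{(\<mu>::4, \<nu>). \<mu> < \<nu>} = {x \<in> UNIV \<times> UNIV. case x of (\<mu>, \<nu>) \<Rightarrow> \<mu> < \<nu>}" by auto
  then have "(\<Sum>(\<mu>, \<nu>)\<in>{(\<mu>::4, \<nu>). \<mu> < \<nu>}. f \<mu> \<nu>)
      = (\<Sum>x\<in>UNIV \<times> UNIV. if case x of (\<mu>, \<nu>) \<Rightarrow> \<mu> < \<nu> then case x of (\<mu>, \<nu>) \<Rightarrow> f \<mu> \<nu> else 0)"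
    by (simp only: sum.inter_filter[OF finite])
  also have "\<dots> = (\<Sum>\<mu>\<in>UNIV. \<Sum>\<nu>\<in>UNIV. if \<mu> < \<nu> then f \<mu> \<nu> else 0)"
    unfolding sum.cartesian_product by (rule sum.cong) (auto split: prod.splits)
  also have "\<dots> = f 4 1 + f 4 2 + f 4 3 + f 1 2 + f 1 3 + f 2 3"
    by (simp only: sum_4 less if_True if_False add_0_left add_0_right)
  finally show ?thesis .
qed

lemma Phistar_closed_form:
  assumes n: "n \<ge> 1" and t: "t \<in> RH"
  shows "Phistar n t = of_real (1 / (4 * real n ^ 3)) *
           ((DH n t + DH (n - 1) t) / 2
            - of_real (
                (1/3) * (\<Sum>\<nu>\<in>UNIV. sinq (real n - 1) (t$\<nu>) *
                           (\<Sum>j\<in>UNIV - {\<nu>}. cos (real n * pi * (2 * t$j + t$\<nu>))))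
              + (1/2) * (\<Sum>j\<in>UNIV. cos (2 * pi * real n * t$j))
              + (1/3) * (\<Sum>(\<mu>, \<nu>)\<in>{(\<mu>::4, \<nu>). \<mu> < \<nu>}. cos (2 * pi * real n * (t$\<mu> + t$\<nu>)))))"
proof -
  have sums: "t$1 + t$2 + t$3 + t$4 = 0" using t by (simp add: RH_def sum_4)
  define a1 a2 a3 a4 where "a1 = epin n (t$1)" and "a2 = epin n (t$2)"
    and "a3 = epin n (t$3)" and "a4 = epin n (t$4)"
  define q1 q2 q3 q4 where "q1 = complex_of_real (sinq (real n - 1) (t$1))"
    and "q2 = complex_of_real (sinq (real n - 1) (t$2))"
    and "q3 = complex_of_real (sinq (real n - 1) (t$3))" and "q4 = complex_of_real (sinq (real n - 1) (t$4))"
  note by_levels = E_power_epin level_sum_E_Inner[OF n]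
    a1_def[symmetric] a2_def[symmetric] a3_def[symmetric] a4_def[symmetric]
    q1_def[symmetric] q2_def[symmetric] q3_def[symmetric] q4_def[symmetric]
  text \<open>Each cosine becomes \<open>(e\<^bsup>i\<theta>\<^esup> + e\<^bsup>-i\<theta>\<^esup>)/2\<close>, where \<open>t\<^sub>1 + t\<^sub>2 + t\<^sub>3 + t\<^sub>4 = 0\<close> is
    used to write \<open>e\<^bsup>-i\<theta>\<^esup>\<close> as a monomial in the remaining \<open>a\<^sub>\<nu>\<close>.\<close>
  have mixed: "t$2 + t$1 + t$3 + t$4 = 0" "t$3 + t$1 + t$2 + t$4 = 0" "t$4 + t$1 + t$2 + t$3 = 0"
    "t$1 + t$2 + t$3 + t$4 = 0" "t$3 + t$2 + t$1 + t$4 = 0" "t$4 + t$2 + t$1 + t$3 = 0"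
    "t$1 + t$3 + t$2 + t$4 = 0" "t$2 + t$3 + t$1 + t$4 = 0" "t$4 + t$3 + t$1 + t$2 = 0"
    "t$1 + t$4 + t$2 + t$3 = 0" "t$2 + t$4 + t$1 + t$3 = 0" "t$3 + t$4 + t$1 + t$2 = 0"
    and single: "t$1 + t$2 + t$3 + t$4 = 0" "t$2 + t$1 + t$3 + t$4 = 0"
    "t$3 + t$1 + t$2 + t$4 = 0" "t$4 + t$1 + t$2 + t$3 = 0"
    and pair: "t$4 + t$1 + t$2 + t$3 = 0" "t$4 + t$2 + t$1 + t$3 = 0" "t$4 + t$3 + t$1 + t$2 = 0"
    "t$1 + t$2 + t$3 + t$4 = 0" "t$1 + t$3 + t$2 + t$4 = 0" "t$2 + t$3 + t$1 + t$4 = 0"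
    using sums by linarith+
  note cosines = mixed[THEN cos_epin_mixed[where n = n]] single[THEN cos_epin_single[where n = n]]
    pair[THEN cos_epin_pair[where n = n]]
  have "of_real (
          (1/3) * (\<Sum>\<nu>\<in>UNIV. sinq (real n - 1) (t$\<nu>) *
                     (\<Sum>j\<in>UNIV - {\<nu>}. cos (real n * pi * (2 * t$j + t$\<nu>))))
          + (1/2) * (\<Sum>j\<in>UNIV. cos (2 * pi * real n * t$j))
          + (1/3) * (\<Sum>(\<mu>, \<nu>)\<in>{(\<mu>::4, \<nu>). \<mu> < \<nu>}. cos (2 * pi * real n * (t$\<mu> + t$\<nu>))))
      = 1/4 * (a1^2 + a2^2 + a3^2 + a4^2) + 1/4 * (a2^2*a3^2*a4^2 + a1^2*a3^2*a4^2 + a1^2*a2^2*a4^2 + a1^2*a2^2*a3^2)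
        + 1/3 * (a1^2*a2^2 + a1^2*a3^2 + a1^2*a4^2 + a2^2*a3^2 + a2^2*a4^2 + a3^2*a4^2)
        + 1/6 * ((a1*q1) * (a2^2 + a3^2 + a4^2 + a3^2*a4^2 + a2^2*a4^2 + a2^2*a3^2)
               + (a2*q2) * (a1^2 + a3^2 + a4^2 + a3^2*a4^2 + a1^2*a4^2 + a1^2*a3^2)
               + (a3*q3) * (a1^2 + a2^2 + a4^2 + a2^2*a4^2 + a1^2*a4^2 + a1^2*a2^2)
               + (a4*q4) * (a1^2 + a2^2 + a3^2 + a2^2*a3^2 + a1^2*a3^2 + a1^2*a2^2))"
    unfolding sum_4_off_diagonal sum_4 sum_4_pairs of_real_add of_real_mult of_real_divide of_real_1
      of_real_numeral cosines by_levels
    by (simp add: field_simps)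
  then show ?thesis
    unfolding Phistar_by_levels[OF n t] DH_by_levels[OF n t] DH_pred_by_levels[OF n t] by_levels
      level_poly_weight_eq_DH[of "a1^2"]
    by simp
qed

theorem theorem3p18:
  fixes n :: nat and f :: "real^4 \<Rightarrow> complex"
  assumes "n \<ge> 1" and "continuous_on (closure OmegaH) f"
  shows "Istar n f \<in> Tn n \<and>
    (\<forall>j\<in>Hcirc n. Istar n f (grid n j) = f (grid n j)) \<and>
    (\<forall>j\<in>Hstar n - Hcirc n. Istar n f (grid n j) = (\<Sum>k\<in>Sset n j. f (grid n k))) \<and>
    (\<forall>t. Im (Phistar n t) = 0) \<and>
    (\<forall>t\<in>RH. Phistar n t = complex_of_real (1 / (4 * real n ^ 3)) *
           ((DH n t + DH (n - 1) t) / 2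
            - complex_of_real (
                (1/3) * (\<Sum>\<nu>\<in>UNIV. sinq (real n - 1) (t$\<nu>) *
                           (\<Sum>j\<in>UNIV - {\<nu>}. cos (real n * pi * (2 * t$j + t$\<nu>))))
              + (1/2) * (\<Sum>j\<in>UNIV. cos (2 * pi * real n * t$j))
              + (1/3) * (\<Sum>(\<mu>, \<nu>)\<in>{(\<mu>::4, \<nu>). \<mu> < \<nu>}. cos (2 * pi * real n * (t$\<mu> + t$\<nu>))))))"
proof -
  have "Istar n f (grid n j) = f (grid n j)" if "j \<in> Hcirc n" for j
    using Istar_grid[OF assms(1), of j f] Sset_Hcirc[OF assms(1) that] Hcirc_subset_Hstar that by auto
  then show ?thesis
    using Istar_in_Tn Istar_grid[OF assms(1)] Phistar_real Phistar_closed_form[OF assms(1)] by blast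
qed

end
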